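(* Let $N\ge 1$, let $a_1,\dots,a_N\in\{0,1\}$ with $a=\sum_i a_i$, and let $h_{UB}\sim\mathcal{CN}(0,\gamma^2)$, $h_{UR,i}\sim\mathcal{CN}(0,\alpha^2)$, $h_{RB,i}\sim\mathcal{CN}(0,\beta^2)$ ($i=1,\dots,N$) be mutually independent, with $\alpha,\beta,\gamma>0$. For $\overline{\gamma}_s>0$ define $$\gamma_s=\overline{\gamma}_s\Big[\Big(|h_{UB}|+\sum_{i=1}^N(1-a_i)|h_{RB,i}||h_{UR,i}|\Big)^2+\sum_{i=1}^N a_i|h_{UR,i}|^2\Big].$$ Then $$\mathbb{E}[\gamma_s]=\overline{\gamma}_s\Big[N^2\tfrac{\pi^2}{16}\alpha^2\beta^2+\alpha^2\beta^2\Big(N\big(1-\tfrac{\pi^2}{8}a-\tfrac{\pi^2}{16}\big)+\tfrac{\pi^2}{16}a(a+1)-a\Big)+\alpha\beta\gamma\,\tfrac{\pi\sqrt{\pi}}{4}(N-a)+a\alpha^2+\gamma^2\Big],$$ $$\mathbb{E}[\gamma_s^2]=\overline{\gamma}_s^2\Big[2\gamma^4+6(N-a)\big(1+\tfrac{\pi^2}{16}(N-a-1)\big)\gamma^2\alpha^2\beta^2+\tfrac{3\pi\sqrt{\pi}}{4}(N-a)\gamma^3\alpha\beta+C_4\alpha^4\beta^4+2\sqrt{\pi}\,C_3\alpha^3\beta^3\gamma+2a\gamma^2\alpha^2+2(N-a)\big(1+\tfrac{\pi^2}{16}(N-a-1)\big)a\alpha^4\beta^2+\tfrac{\pi\sqrt{\pi}}{2}(N-a)a\alpha^3\gamma\beta+a(a+1)\alpha^4\Big],$$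 where $C_3=\tfrac{9\pi}{16}(N-a)+\tfrac{3\pi}{4}(N-a)(N-a-1)+\tfrac{\pi^3}{64}(N-a)(N-a-1)(N-a-2)$ and $C_4=4(N-a)+\tfrac{9\pi^2}{16}(N-a)(N-a-1)+3(N-a)(N-a-1)+\tfrac{6\pi^2}{16}(N-a)(N-a-1)(N-a-2)+\tfrac{\pi^4}{256}(N-a)(N-a-1)(N-a-2)(N-a-3)$. Consequently, the Gamma distribution $\Gamma(k,p)$ with the same first two moments as $\gamma_s$ (used as an approximation of the distribution of $\gamma_s$) has shape $k=\frac{\mathbb{E}[\gamma_s]^2}{\mathbb{E}[\gamma_s^2]-\mathbb{E}[\gamma_s]^2}$ and scale $p=\frac{\mathbb{E}[\gamma_s^2]-\mathbb{E}[\gamma_s]^2}{\mathbb{E}[\gamma_s]}$.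
   Context: $\gamma_s$ is the received SNR of an uplink single-antenna user / single-antenna base station system aided by an $N$-element RDARS surface, of which $a$ elements ($a_i=1$) operate as remote antennas connected to the base station and $N-a$ elements ($a_i=0$) operate as passive reflectors with optimal (coherently aligned) phase shifts, under maximum ratio combining and equal noise variances; $\overline{\gamma}_s$ is the transmit SNR. $\mathcal{CN}(0,\sigma^2)$ is the circularly symmetric complex Gaussian distribution. $\Gamma(k,p)$ denotes the Gamma distribution with shape $k$ and scale $p$. *)

theory Defs
  imports "HOL-Probability.Probability"
begin

datatype chan = UB | UR nat | RB nat

definition CN_density :: "real \<Rightarrow> complex \<Rightarrow> ennreal" where
  "CN_density s2 z = ennreal (exp (- (norm z * norm z) / s2) / (pi * s2))"

definition gamma_density :: "real \<Rightarrow> real \<Rightarrow> real \<Rightarrow> real" where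
  "gamma_density k p x =
     (if 0 < x then x powr (k - 1) * exp (- x / p) / (Gamma k * p powr k) else 0)"

definition rdars_snr ::
  "nat \<Rightarrow> (nat \<Rightarrow> real) \<Rightarrow> real \<Rightarrow> complex \<Rightarrow> (nat \<Rightarrow> complex) \<Rightarrow> (nat \<Rightarrow> complex) \<Rightarrow> real" where
  "rdars_snr N A gbar hUB hUR hRB =
     gbar * ((cmod hUB + (\<Sum>i=1..N. (1 - A i) * cmod (hRB i) * cmod (hUR i)))^2
             + (\<Sum>i=1..N. A i * (cmod (hUR i))^2))"

end

theory Submission
  imports Defs
begin

text \<open>
  The SNR is \<open>gbar (R\<^sup>2 + Z)\<close>, where the coherent amplitude
  \<open>R = |h_UB| + \<Sum> |h_UR,i| |h_RB,i|\<close> runs over the reflecting elements and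
  \<open>Z = \<Sum> |h_UR,i|\<^sup>2\<close> over the connected ones. \<open>R\<close> and \<open>Z\<close> are independent,
  and each is a sum of independent terms whose moments are products of moments of
  Rayleigh variables: the magnitude of a \<open>CN(0, \<sigma>\<^sup>2)\<close> variable has \<open>k\<close>-th moment
  \<open>\<sigma>\<^sup>k \<Gamma>(k/2 + 1)\<close>. The moments of a sum of independent variables are binomial
  convolutions of the moments of the summands, so \<open>E[\<gamma>_s]\<close> and \<open>E[\<gamma>_s\<^sup>2]\<close> are
  explicit polynomials in these Rayleigh moments. Finally \<open>\<Gamma>(k, p)\<close> has mean \<open>k p\<close>
  and second moment \<open>k (k + 1) p\<^sup>2\<close>, and solving for \<open>k\<close> and \<open>p\<close> gives the
  moment-matching parameters.
\<close>

section \<open>Moments of the magnitude of a circularly symmetric complex Gaussian\<close>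

lemma borel_measurable_Complex_pair [measurable]:
  "(\<lambda>(x, y). Complex x y) \<in> borel_measurable (lborel \<Otimes>\<^sub>M (lborel :: real measure))"
  by (simp add: Complex_eq case_prod_beta')

lemma lborel_complex_eq_distr_pair:
  "(lborel :: complex measure) = distr (lborel \<Otimes>\<^sub>M lborel) borel (\<lambda>(x, y). Complex x y)"
proof (rule lborel_eqI)
  fix l u :: complex
  assume "\<And>b. b \<in> Basis \<Longrightarrow> l \<bullet> b \<le> u \<bullet> b"
  from this[of 1] this[of \<i>] have le: "Re l \<le> Re u" "Im l \<le> Im u"
    by (auto simp: inner_complex_def)
  have preimage: "(\<lambda>(x, y). Complex x y) -` box l u \<inter> space (lborel \<Otimes>\<^sub>M lborel)
      = {Re l<..<Re u} \<times> {Im l<..<Im u}"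
    by (auto simp: box_def Basis_complex_def inner_complex_def space_pair_measure)
  have "emeasure (distr (lborel \<Otimes>\<^sub>M lborel) borel (\<lambda>(x, y). Complex x y)) (box l u)
      = emeasure (lborel \<Otimes>\<^sub>M lborel) ({Re l<..<Re u} \<times> {Im l<..<Im u})"
    by (subst emeasure_distr) (auto simp: preimage)
  also have "\<dots> = ennreal ((Re u - Re l) * (Im u - Im l))"
    using le by (simp add: lborel.emeasure_pair_measure_Times ennreal_mult)
  finally show "emeasure (distr (lborel \<Otimes>\<^sub>M lborel) borel (\<lambda>(x, y). Complex x y)) (box l u)
      = (\<Prod>b\<in>Basis. (u - l) \<bullet> b)"
    by (simp add: Basis_complex_def inner_complex_def)
qed simp

lemma nn_integral_lborel_complex:
  assumes [measurable]: "f \<in> borel_measurable (borel :: complex measure)"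
  shows "(\<integral>\<^sup>+z. f z \<partial>lborel) = (\<integral>\<^sup>+x. \<integral>\<^sup>+y. f (Complex x y) \<partial>lborel \<partial>lborel)"
  by (subst lborel_complex_eq_distr_pair)
     (simp add: nn_integral_distr lborel.nn_integral_fst[symmetric] case_prod_beta')

lemma nn_integral_inverse_one_plus_square:
  "(\<integral>\<^sup>+t. ennreal (1 / (1 + t\<^sup>2)) \<partial>lborel) = ennreal pi"
proof -
  have "(\<integral>\<^sup>+t. ennreal (1 / (1 + t\<^sup>2)) * indicator {0..} t \<partial>lborel) = ennreal (pi / 2 - arctan 0)"
    by (rule nn_integral_FTC_atLeast[OF _ _ _ tendsto_arctan_at_top])
       (auto intro!: derivative_eq_intros simp: add_nonneg_eq_0_iff field_simps power2_eq_square)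
  then have "has_bochner_integral lborel (\<lambda>t. indicator {0..} t *\<^sub>R (1 / (1 + t\<^sup>2))) (pi / 2)"
    by (intro has_bochner_integral_nn_integral) (auto simp: mult.commute indicator_mult_ennreal)
  from has_bochner_integral_even_function[OF this]
  have "has_bochner_integral lborel (\<lambda>t::real. 1 / (1 + t\<^sup>2)) pi"
    by simp
  then show ?thesis
    by (subst nn_integral_eq_integrable) (auto simp: has_bochner_integral_iff)
qed

text \<open>Polar coordinates in disguise: substituting \<open>y = x t\<close> and then
  \<open>x = u / sqrt (1 + t\<^sup>2)\<close> separates the variables, and the remaining \<open>t\<close>-integral is \<open>\<pi>\<close>.\<close>

lemma nn_integral_radial:
  fixes f :: "real \<Rightarrow> ennreal"
  assumes [measurable]: "f \<in> borel_measurable borel"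
  shows "(\<integral>\<^sup>+z. f (cmod z) \<partial>lborel) = pi * (\<integral>\<^sup>+u. ennreal \<bar>u\<bar> * f \<bar>u\<bar> \<partial>lborel)"
proof -
  define K where "K = (\<integral>\<^sup>+u. ennreal \<bar>u\<bar> * f \<bar>u\<bar> \<partial>lborel)"
  define g where "g x t = ennreal \<bar>x\<bar> * f (\<bar>x\<bar> * sqrt (1 + t\<^sup>2))" for x t
  have [measurable]: "case_prod g \<in> borel_measurable (lborel \<Otimes>\<^sub>M lborel)"
    unfolding g_def by measurable
  have inner_y: "AE x in lborel. (\<integral>\<^sup>+y. f (sqrt (x\<^sup>2 + y\<^sup>2)) \<partial>lborel) = (\<integral>\<^sup>+t. g x t \<partial>lborel)"
    using AE_lborel_singleton[of 0]
  proof eventually_elim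
    case (elim x)
    have "sqrt (x\<^sup>2 + (x * t)\<^sup>2) = \<bar>x\<bar> * sqrt (1 + t\<^sup>2)" for t
    proof -
      have "x\<^sup>2 + (x * t)\<^sup>2 = x\<^sup>2 * (1 + t\<^sup>2)"
        by (simp add: algebra_simps power_mult_distrib)
      then show ?thesis
        by (simp add: real_sqrt_mult)
    qed
    then show ?case
      using elim by (subst nn_integral_real_affine[where c = x and t = 0])
        (auto simp: g_def[abs_def] nn_integral_cmult)
  qed
  have inner_x: "(\<integral>\<^sup>+x. g x t \<partial>lborel) = ennreal (1 / (1 + t\<^sup>2)) * K" for t
  proof -
    define s where "s = sqrt (1 + t\<^sup>2)"
    have s: "s > 0" "s * s = 1 + t\<^sup>2"
      by (simp_all add: s_def add_pos_nonneg)
    have "(\<integral>\<^sup>+x. g x t \<partial>lborel) = ennreal (1 / s) * (\<integral>\<^sup>+u. g (u / s) t \<partial>lborel)"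
      using s by (subst nn_integral_real_affine[where c = "1 / s" and t = 0]) (auto simp: g_def)
    also have "(\<integral>\<^sup>+u. g (u / s) t \<partial>lborel) = ennreal (1 / s) * K"
    proof -
      have "g (u / s) t = ennreal (1 / s) * (ennreal \<bar>u\<bar> * f \<bar>u\<bar>)" for u
      proof -
        have "ennreal (\<bar>u\<bar> / s) = ennreal (1 / s) * ennreal \<bar>u\<bar>"
          using s by (simp add: ennreal_mult'[symmetric])
        then show ?thesis
          using s by (simp add: g_def s_def[symmetric] abs_div mult.assoc)
      qed
      then show ?thesis
        by (simp add: nn_integral_cmult K_def)
    qed
    also have "ennreal (1 / s) * (ennreal (1 / s) * K) = ennreal (1 / (1 + t\<^sup>2)) * K"
      using s by (simp add: mult.assoc[symmetric] ennreal_mult'[symmetric] flip: s(2))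
    finally show ?thesis .
  qed
  have "(\<integral>\<^sup>+z. f (cmod z) \<partial>lborel) = (\<integral>\<^sup>+x. \<integral>\<^sup>+y. f (sqrt (x\<^sup>2 + y\<^sup>2)) \<partial>lborel \<partial>lborel)"
    by (simp add: nn_integral_lborel_complex complex_norm)
  also have "\<dots> = (\<integral>\<^sup>+x. \<integral>\<^sup>+t. g x t \<partial>lborel \<partial>lborel)"
    by (rule nn_integral_cong_AE[OF inner_y])
  also have "\<dots> = (\<integral>\<^sup>+t. \<integral>\<^sup>+x. g x t \<partial>lborel \<partial>lborel)"
    by (rule lborel_pair.Fubini'[symmetric]) simp
  also have "\<dots> = (\<integral>\<^sup>+t. K * ennreal (1 / (1 + t\<^sup>2)) \<partial>lborel)"
    by (simp add: inner_x mult.commute)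
  also have "\<dots> = pi * K"
    by (subst nn_integral_cmult) (simp_all add: nn_integral_inverse_one_plus_square mult.commute)
  finally show ?thesis
    by (simp add: K_def)
qed

lemma Gamma_of_nat_plus_half:
  "Gamma (real k + 1 / 2) = sqrt pi * fact (2 * k) / (2 ^ (2 * k) * fact k)"
proof -
  have "(1 / 2 :: real) \<notin> \<int>\<^sub>\<le>\<^sub>0"
    by (auto elim!: nonpos_Ints_cases)
  then have "Gamma (1 / 2 + real k) = pochhammer (1 / 2) k * sqrt pi"
    by (simp add: pochhammer_Gamma Gamma_one_half_real)
  then show ?thesis
    by (simp add: fact_double add.commute)
qed

lemma nn_integral_abs_power_gaussian:
  "(\<integral>\<^sup>+u. ennreal (\<bar>u\<bar> ^ n * exp (- u\<^sup>2)) \<partial>lborel) = ennreal (Gamma ((real n + 1) / 2))"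
proof -
  have "has_bochner_integral lborel (\<lambda>u. \<bar>u\<bar> ^ n * exp (- u\<^sup>2)) (Gamma ((real n + 1) / 2))"
  proof (cases "even n")
    case True
    then obtain k where n: "n = 2 * k"
      by blast
    have "(real n + 1) / 2 = real k + 1 / 2"
      by (simp add: n field_simps)
    then have "Gamma ((real n + 1) / 2) = sqrt pi * fact (2 * k) / (2 ^ (2 * k) * fact k)"
      by (simp only: Gamma_of_nat_plus_half)
    then show ?thesis
      using has_bochner_integral_even_function[OF gaussian_moment_even_pos[of k]]
      by (simp add: n power_even_abs mult.commute)
  next
    case False
    then obtain k where n: "n = 2 * k + 1"
      using oddE by blast
    have "(real n + 1) / 2 = 1 + real k"
      by (simp add: n)
    then have Gamma_eq: "Gamma ((real n + 1) / 2) = fact k"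
      by (simp only: Gamma_fact)
    have "has_bochner_integral lborel
        (\<lambda>u. indicator {0..} u *\<^sub>R (\<bar>u\<bar> ^ n * exp (- u\<^sup>2))) (fact k / 2 :: real)"
      by (rule has_bochner_integral_cong[THEN iffD1, OF _ _ _ gaussian_moment_odd_pos[of k]])
        (auto simp: n mult.commute)
    from has_bochner_integral_even_function[OF this]
    show ?thesis
      by (simp add: Gamma_eq)
  qed
  then show ?thesis
    by (subst nn_integral_eq_integrable) (auto simp: has_bochner_integral_iff)
qed

lemma nn_integral_CN_density_norm_power:
  assumes "\<sigma> > 0"
  shows "(\<integral>\<^sup>+z. CN_density (\<sigma>\<^sup>2) z * ennreal (cmod z ^ m) \<partial>lborel)
    = ennreal (\<sigma> ^ m * Gamma (real m / 2 + 1))"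
proof -
  define f where "f r = ennreal (exp (- (r * r) / \<sigma>\<^sup>2) / (pi * \<sigma>\<^sup>2) * r ^ m)" for r
  define h where "h u = \<bar>u\<bar> ^ (m + 1) * exp (- u\<^sup>2 / \<sigma>\<^sup>2) / \<sigma>\<^sup>2" for u
  define c where "c = \<sigma> ^ (m + 1) / \<sigma>\<^sup>2"
  define G where "G = Gamma ((real (m + 1) + 1) / 2)"
  have "(\<integral>\<^sup>+z. CN_density (\<sigma>\<^sup>2) z * ennreal (cmod z ^ m) \<partial>lborel)
      = (\<integral>\<^sup>+z. f (cmod z) \<partial>lborel)"
    by (simp add: CN_density_def f_def ennreal_mult'[symmetric])
  also have "\<dots> = pi * (\<integral>\<^sup>+u. ennreal \<bar>u\<bar> * f \<bar>u\<bar> \<partial>lborel)"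
    by (rule nn_integral_radial) (simp add: f_def)
  also have "\<dots> = (\<integral>\<^sup>+u. ennreal (h u) \<partial>lborel)"
  proof -
    have "ennreal pi * (ennreal \<bar>u\<bar> * f \<bar>u\<bar>) = ennreal (h u)" for u
      using assms by (simp add: f_def h_def ennreal_mult'[symmetric] power2_eq_square field_simps)
    then show ?thesis
      by (subst nn_integral_cmult[symmetric]) (simp_all add: f_def)
  qed
  also have "\<dots> = ennreal \<sigma> * (\<integral>\<^sup>+v. ennreal (h (\<sigma> * v)) \<partial>lborel)"
    using assms by (subst nn_integral_real_affine[where c = \<sigma> and t = 0]) (auto simp: h_def)
  also have "(\<lambda>v. ennreal (h (\<sigma> * v))) = (\<lambda>v. ennreal c * ennreal (\<bar>v\<bar> ^ (m + 1) * exp (- v\<^sup>2)))"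
    using assms by (auto simp: h_def c_def abs_mult power_mult_distrib ennreal_mult'[symmetric])
  also have "(\<integral>\<^sup>+v. ennreal c * ennreal (\<bar>v\<bar> ^ (m + 1) * exp (- v\<^sup>2)) \<partial>lborel) = ennreal c * ennreal G"
    unfolding G_def using nn_integral_abs_power_gaussian[of "m + 1"]
    by (subst nn_integral_cmult) simp_all
  also have "ennreal \<sigma> * (ennreal c * ennreal G) = ennreal (\<sigma> * c * G)"
    using assms by (simp add: c_def ennreal_mult'[symmetric] mult.assoc)
  also have "\<sigma> * c * G = \<sigma> ^ m * Gamma (real m / 2 + 1)"
    using assms by (simp add: c_def G_def power2_eq_square field_simps)
  finally show ?thesis .
qed

definition rayleigh_moment :: "real \<Rightarrow> nat \<Rightarrow> real" where
  "rayleigh_moment \<sigma> k = \<sigma> ^ k * Gamma (real k / 2 + 1)"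

lemma rayleigh_moment_numeral:
  "rayleigh_moment \<sigma> 0 = 1"
  "rayleigh_moment \<sigma> 1 = sqrt pi / 2 * \<sigma>"
  "rayleigh_moment \<sigma> 2 = \<sigma>\<^sup>2"
  "rayleigh_moment \<sigma> 3 = 3 * sqrt pi / 4 * \<sigma> ^ 3"
  "rayleigh_moment \<sigma> 4 = 2 * \<sigma> ^ 4"
proof -
  have "Gamma (real 1 + 1 / 2) = sqrt pi / 2" "Gamma (real 2 + 1 / 2) = 3 * sqrt pi / 4"
    by (simp_all only: Gamma_of_nat_plus_half) (simp_all add: fact_numeral)
  moreover have "Gamma (1 + real 1) = 1" "Gamma (1 + real 2) = 2"
    by (simp_all only: Gamma_fact) simp_all
  ultimately show "rayleigh_moment \<sigma> 0 = 1" "rayleigh_moment \<sigma> 1 = sqrt pi / 2 * \<sigma>"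
    "rayleigh_moment \<sigma> 2 = \<sigma>\<^sup>2" "rayleigh_moment \<sigma> 3 = 3 * sqrt pi / 4 * \<sigma> ^ 3"
    "rayleigh_moment \<sigma> 4 = 2 * \<sigma> ^ 4"
    by (simp_all add: rayleigh_moment_def field_simps)
qed

section \<open>Moment sequences of random variables and of independent sums\<close>

definition (in prob_space) has_moments :: "('a \<Rightarrow> real) \<Rightarrow> nat \<Rightarrow> (nat \<Rightarrow> real) \<Rightarrow> bool" where
  "has_moments X K \<mu> \<longleftrightarrow>
     (\<forall>k\<le>K. integrable M (\<lambda>\<omega>. X \<omega> ^ k) \<and> expectation (\<lambda>\<omega>. X \<omega> ^ k) = \<mu> k)"

lemma (in prob_space) CN_norm_has_moments:
  assumes "\<sigma> > 0" and h: "distributed M lborel h (CN_density (\<sigma>\<^sup>2))"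
  shows "has_moments (\<lambda>\<omega>. cmod (h \<omega>)) K (rayleigh_moment \<sigma>)"
  unfolding has_moments_def
proof (intro allI impI)
  fix k
  have [measurable]: "h \<in> borel_measurable M"
    using distributed_measurable[OF h] by simp
  have "(\<integral>\<^sup>+\<omega>. ennreal (cmod (h \<omega>) ^ k) \<partial>M)
      = (\<integral>\<^sup>+z. CN_density (\<sigma>\<^sup>2) z * ennreal (cmod z ^ k) \<partial>lborel)"
    by (rule distributed_nn_integral[OF h, symmetric]) simp
  also have "\<dots> = ennreal (rayleigh_moment \<sigma> k)"
    unfolding rayleigh_moment_def using assms(1) by (rule nn_integral_CN_density_norm_power)
  finally show "integrable M (\<lambda>\<omega>. cmod (h \<omega>) ^ k)
      \<and> expectation (\<lambda>\<omega>. cmod (h \<omega>) ^ k) = rayleigh_moment \<sigma> k"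
    using assms(1) by (subst (asm) nn_integral_eq_integrable) (auto simp: rayleigh_moment_def)
qed

lemma (in prob_space) has_moments_scale:
  assumes "has_moments X K \<mu>"
  shows "has_moments (\<lambda>\<omega>. c * X \<omega>) K (\<lambda>k. c ^ k * \<mu> k)"
  using assms by (simp add: has_moments_def power_mult_distrib)

lemma (in prob_space) has_moments_square:
  assumes "has_moments X (2 * K) \<mu>"
  shows "has_moments (\<lambda>\<omega>. (X \<omega>)\<^sup>2) K (\<lambda>k. \<mu> (2 * k))"
  using assms by (simp add: has_moments_def power_mult[symmetric])

lemma (in prob_space) indep_var_power_product:
  fixes U V :: "'a \<Rightarrow> real"
  assumes "indep_var borel U borel V"
    and "integrable M (\<lambda>\<omega>. U \<omega> ^ i)" "integrable M (\<lambda>\<omega>. V \<omega> ^ j)"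
  shows "integrable M (\<lambda>\<omega>. U \<omega> ^ i * V \<omega> ^ j)"
    and "expectation (\<lambda>\<omega>. U \<omega> ^ i * V \<omega> ^ j)
      = expectation (\<lambda>\<omega>. U \<omega> ^ i) * expectation (\<lambda>\<omega>. V \<omega> ^ j)"
proof -
  have "indep_var borel ((\<lambda>x. x ^ i) \<circ> U) borel ((\<lambda>x. x ^ j) \<circ> V)"
    by (rule indep_var_compose[OF assms(1)]) auto
  then show "integrable M (\<lambda>\<omega>. U \<omega> ^ i * V \<omega> ^ j)"
    and "expectation (\<lambda>\<omega>. U \<omega> ^ i * V \<omega> ^ j)
      = expectation (\<lambda>\<omega>. U \<omega> ^ i) * expectation (\<lambda>\<omega>. V \<omega> ^ j)"
    using indep_var_integrable indep_var_lebesgue_integral assms(2,3) by (auto simp: comp_def)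
qed

lemma (in prob_space) has_moments_indep_mult:
  assumes "indep_var borel U borel V" "has_moments U K \<mu>" "has_moments V K \<nu>"
  shows "has_moments (\<lambda>\<omega>. U \<omega> * V \<omega>) K (\<lambda>k. \<mu> k * \<nu> k)"
  using assms indep_var_power_product[OF assms(1)]
  by (simp add: has_moments_def power_mult_distrib)

definition moment_conv :: "(nat \<Rightarrow> real) \<Rightarrow> (nat \<Rightarrow> real) \<Rightarrow> nat \<Rightarrow> real" where
  "moment_conv \<mu> \<nu> k = (\<Sum>j\<le>k. real (k choose j) * \<mu> j * \<nu> (k - j))"

lemma (in prob_space) has_moments_indep_add:
  assumes ind: "indep_var borel U borel V" and U: "has_moments U K \<mu>" and V: "has_moments V K \<nu>"
  shows "has_moments (\<lambda>\<omega>. U \<omega> + V \<omega>) K (moment_conv \<mu> \<nu>)"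
  unfolding has_moments_def
proof (intro allI impI)
  fix k assume "k \<le> K"
  then have summand: "integrable M (\<lambda>\<omega>. U \<omega> ^ j * V \<omega> ^ (k - j))
      \<and> expectation (\<lambda>\<omega>. U \<omega> ^ j * V \<omega> ^ (k - j)) = \<mu> j * \<nu> (k - j)" if "j \<le> k" for j
    using U V that indep_var_power_product[OF ind] by (simp add: has_moments_def)
  have binomial: "(\<lambda>\<omega>. (U \<omega> + V \<omega>) ^ k)
      = (\<lambda>\<omega>. \<Sum>j\<le>k. real (k choose j) * (U \<omega> ^ j * V \<omega> ^ (k - j)))"
    by (simp add: binomial_ring mult.assoc)
  show "integrable M (\<lambda>\<omega>. (U \<omega> + V \<omega>) ^ k)
      \<and> expectation (\<lambda>\<omega>. (U \<omega> + V \<omega>) ^ k) = moment_conv \<mu> \<nu> k"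
    unfolding binomial moment_conv_def using summand
    by (auto intro!: Bochner_Integration.integrable_sum integrable_mult_right sum.cong
        simp: Bochner_Integration.integral_sum)
qed

fun iid_sum_moment :: "(nat \<Rightarrow> real) \<Rightarrow> nat \<Rightarrow> nat \<Rightarrow> real" where
  "iid_sum_moment \<mu> 0 = (\<lambda>k. 0 ^ k)"
| "iid_sum_moment \<mu> (Suc n) = moment_conv \<mu> (iid_sum_moment \<mu> n)"

lemma (in prob_space) has_moments_indep_sum:
  assumes "finite I" "indep_vars (\<lambda>_. borel) X I" "\<And>i. i \<in> I \<Longrightarrow> has_moments (X i) K \<mu>"
  shows "has_moments (\<lambda>\<omega>. \<Sum>i\<in>I. X i \<omega>) K (iid_sum_moment \<mu> (card I))"
  using assms
proof (induction I rule: finite_induct)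
  case empty
  then show ?case
    by (simp add: has_moments_def prob_space)
next
  case (insert i I)
  have "indep_vars (\<lambda>_. borel) X I"
    using insert.prems(1) by (rule indep_vars_subset) auto
  then have "has_moments (\<lambda>\<omega>. \<Sum>i\<in>I. X i \<omega>) K (iid_sum_moment \<mu> (card I))"
    using insert.IH insert.prems(2) by blast
  moreover have "indep_var borel (X i) borel (\<lambda>\<omega>. \<Sum>i\<in>I. X i \<omega>)"
    using insert.hyps insert.prems(1) by (rule indep_vars_sum)
  ultimately show ?case
    using has_moments_indep_add insert.hyps insert.prems(2) by simp
qed

lemma (in prob_space) indep_var_sums_of_disjoint:
  fixes X :: "'i \<Rightarrow> 'a \<Rightarrow> real"
  assumes "indep_vars (\<lambda>_. borel) X I" "I1 \<subseteq> I" "I2 \<subseteq> I" "I1 \<inter> I2 = {}"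
  shows "indep_var borel (\<lambda>\<omega>. \<Sum>i\<in>I1. X i \<omega>) borel (\<lambda>\<omega>. \<Sum>i\<in>I2. X i \<omega>)"
proof -
  have "indep_var
      borel ((\<lambda>f. \<Sum>i\<in>I1. f i) \<circ> (\<lambda>\<omega>. restrict (\<lambda>i. X i \<omega>) I1))
      borel ((\<lambda>f. \<Sum>i\<in>I2. f i) \<circ> (\<lambda>\<omega>. restrict (\<lambda>i. X i \<omega>) I2))"
    using assms by (intro indep_var_compose[OF indep_var_restrict[OF assms(1)]]) auto
  then show ?thesis
    by (simp add: comp_def cong: sum.cong)
qed

lemma moment_conv_numeral:
  "moment_conv \<mu> \<nu> 0 = \<mu> 0 * \<nu> 0"
  "moment_conv \<mu> \<nu> 1 = \<mu> 0 * \<nu> 1 + \<mu> 1 * \<nu> 0"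
  "moment_conv \<mu> \<nu> 2 = \<mu> 0 * \<nu> 2 + 2 * \<mu> 1 * \<nu> 1 + \<mu> 2 * \<nu> 0"
  "moment_conv \<mu> \<nu> 3 = \<mu> 0 * \<nu> 3 + 3 * \<mu> 1 * \<nu> 2 + 3 * \<mu> 2 * \<nu> 1 + \<mu> 3 * \<nu> 0"
  "moment_conv \<mu> \<nu> 4 = \<mu> 0 * \<nu> 4 + 4 * \<mu> 1 * \<nu> 3 + 6 * \<mu> 2 * \<nu> 2 + 4 * \<mu> 3 * \<nu> 1
     + \<mu> 4 * \<nu> 0"
  by (simp_all add: moment_conv_def numeral_eq_Suc)

text \<open>The simplifier rewrites \<open>1 :: nat\<close> to \<open>Suc 0\<close> (\<open>One_nat_def\<close>), which would keep
  the lemmas below, stated with the numeral, from firing; hence \<open>del: One_nat_def\<close>.\<close>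

context
  fixes \<mu> :: "nat \<Rightarrow> real"
  assumes \<mu>0: "\<mu> 0 = 1"
begin

lemma iid_sum_moment_0: "iid_sum_moment \<mu> n 0 = 1"
  by (induction n) (simp_all add: moment_conv_def \<mu>0)

lemma iid_sum_moment_1: "iid_sum_moment \<mu> n 1 = n * \<mu> 1"
  by (induction n) (simp_all add: moment_conv_numeral \<mu>0 iid_sum_moment_0 algebra_simps del: One_nat_def)

lemma iid_sum_moment_2: "iid_sum_moment \<mu> n 2 = n * \<mu> 2 + n * (n - 1) * \<mu> 1 ^ 2"
  by (induction n)
    (simp_all add: moment_conv_numeral \<mu>0 iid_sum_moment_0 iid_sum_moment_1 algebra_simps
      power2_eq_square del: One_nat_def)

lemma iid_sum_moment_3:
  "iid_sum_moment \<mu> n 3 = n * \<mu> 3 + 3 * n * (n - 1) * \<mu> 2 * \<mu> 1 + n * (n - 1) * (n - 2) * \<mu> 1 ^ 3"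
  by (induction n)
    (simp_all add: moment_conv_numeral \<mu>0 iid_sum_moment_0 iid_sum_moment_1 iid_sum_moment_2
      algebra_simps power2_eq_square power3_eq_cube del: One_nat_def)

lemma iid_sum_moment_4:
  "iid_sum_moment \<mu> n 4 = n * \<mu> 4 + 4 * n * (n - 1) * \<mu> 3 * \<mu> 1 + 3 * n * (n - 1) * \<mu> 2 ^ 2
     + 6 * n * (n - 1) * (n - 2) * \<mu> 2 * \<mu> 1 ^ 2 + n * (n - 1) * (n - 2) * (n - 3) * \<mu> 1 ^ 4"
  by (induction n)
    (simp_all add: moment_conv_numeral \<mu>0 iid_sum_moment_0 iid_sum_moment_1 iid_sum_moment_2
      iid_sum_moment_3 algebra_simps power2_eq_square power3_eq_cube power4_eq_xxxx del: One_nat_def)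

end

section \<open>The RDARS channel model\<close>

locale rdars_channels = prob_space M for M :: "'s measure" +
  fixes N :: nat and A :: "nat \<Rightarrow> real" and alpha beta gamma :: real
    and hUB :: "'s \<Rightarrow> complex" and hUR hRB :: "nat \<Rightarrow> 's \<Rightarrow> complex"
  assumes A01: "\<forall>i\<in>{1..N}. A i = 0 \<or> A i = 1"
    and alpha_pos: "alpha > 0" and beta_pos: "beta > 0" and gamma_pos: "gamma > 0"
    and indep_channels: "indep_vars (\<lambda>_. borel)
        (\<lambda>j. case j of UB \<Rightarrow> hUB | UR i \<Rightarrow> hUR i | RB i \<Rightarrow> hRB i)
        (insert UB (UR ` {1..N} \<union> RB ` {1..N}))"
    and distributed_UB: "distributed M lborel hUB (CN_density (gamma\<^sup>2))"
    and distributed_UR: "\<forall>i\<in>{1..N}. distributed M lborel (hUR i) (CN_density (alpha\<^sup>2))"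
    and distributed_RB: "\<forall>i\<in>{1..N}. distributed M lborel (hRB i) (CN_density (beta\<^sup>2))"
begin

definition gain :: "chan \<Rightarrow> 's \<Rightarrow> real" where
  "gain j \<omega> = cmod ((case j of UB \<Rightarrow> hUB | UR i \<Rightarrow> hUR i | RB i \<Rightarrow> hRB i) \<omega>)"

definition reflecting :: "nat set" where
  "reflecting = {i\<in>{1..N}. A i = 0}"

definition connected :: "nat set" where
  "connected = {i\<in>{1..N}. A i = 1}"

text \<open>Index 0 stands for the direct link.\<close>

definition link_gain :: "nat \<Rightarrow> 's \<Rightarrow> real" where
  "link_gain i \<omega> =
     (if i = 0 then gain UB \<omega>
      else if A i = 0 then gain (UR i) \<omega> * gain (RB i) \<omega>
      else (gain (UR i) \<omega>)\<^sup>2)"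

definition coherent_amplitude :: "'s \<Rightarrow> real" where
  "coherent_amplitude \<omega> = link_gain 0 \<omega> + (\<Sum>i\<in>reflecting. link_gain i \<omega>)"

definition connected_energy :: "'s \<Rightarrow> real" where
  "connected_energy \<omega> = (\<Sum>i\<in>connected. link_gain i \<omega>)"

abbreviation snr :: "real \<Rightarrow> 's \<Rightarrow> real" where
  "snr gbar \<omega> \<equiv> rdars_snr N A gbar (hUB \<omega>) (\<lambda>i. hUR i \<omega>) (\<lambda>i. hRB i \<omega>)"

lemma reflecting_connected_partition:
  "reflecting \<inter> connected = {}" "reflecting \<union> connected = {1..N}"
  using A01 by (auto simp: reflecting_def connected_def)

lemma sum_A_eq_card_connected: "(\<Sum>i=1..N. A i) = real (card connected)"
proof -
  have "real (card connected) = (\<Sum>i\<in>{1..N}. if A i = 1 then 1 else 0)"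
    unfolding connected_def sum.inter_filter[OF finite_atLeastAtMost, symmetric] by simp
  also have "\<dots> = (\<Sum>i=1..N. A i)"
    using A01 by (intro sum.cong) auto
  finally show ?thesis ..
qed

lemma N_eq_card_connected_reflecting: "real N = real (card connected) + real (card reflecting)"
  using card_Un_disjoint[of reflecting connected] reflecting_connected_partition
  by (simp add: reflecting_def connected_def)

lemma snr_eq:
  "snr gbar \<omega>
    = gbar * ((coherent_amplitude \<omega>)\<^sup>2 + connected_energy \<omega>)"
proof -
  have "(\<Sum>i\<in>reflecting. link_gain i \<omega>) = (\<Sum>i=1..N. (1 - A i) * cmod (hRB i \<omega>) * cmod (hUR i \<omega>))"
    and "(\<Sum>i\<in>connected. link_gain i \<omega>) = (\<Sum>i=1..N. A i * (cmod (hUR i \<omega>))\<^sup>2)"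
    unfolding reflecting_def connected_def sum.inter_filter[OF finite_atLeastAtMost]
    using A01 by (auto intro!: sum.cong simp: link_gain_def gain_def)
  then show ?thesis
    by (simp add: rdars_snr_def coherent_amplitude_def connected_energy_def link_gain_def gain_def)
qed

lemma indep_gains: "indep_vars (\<lambda>_. borel) gain (insert UB (UR ` {1..N} \<union> RB ` {1..N}))"
  using indep_vars_compose2[OF indep_channels, of "\<lambda>_. cmod" "\<lambda>_. borel"]
  by (simp add: gain_def[abs_def])

lemma indep_link_gains: "indep_vars (\<lambda>_. borel) link_gain {0..N}"
proof -
  define K where "K i = (if i = 0 then {UB} else {UR i, RB i})" for i
  define F where "F i f = (if i = 0 then f UB else if A i = 0 then f (UR i) * f (RB i) else (f (UR i))\<^sup>2)"
    for i and f :: "chan \<Rightarrow> real"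
  have component: "(\<lambda>f. f j) \<in> borel_measurable (PiM J (\<lambda>_. borel))" if "j \<in> J" for j and J :: "chan set"
    using measurable_component_singleton[OF that, of "\<lambda>_. borel"] by simp
  have "indep_vars (\<lambda>i. PiM (K i) (\<lambda>_. borel)) (\<lambda>i \<omega>. restrict (\<lambda>j. gain j \<omega>) (K i)) {0..N}"
    by (rule indep_vars_restrict[OF indep_gains]) (auto simp: K_def disjoint_family_on_def)
  then have "indep_vars (\<lambda>_. borel) (\<lambda>i \<omega>. F i (restrict (\<lambda>j. gain j \<omega>) (K i))) {0..N}"
    by (rule indep_vars_compose2)
      (auto simp: F_def K_def intro!: borel_measurable_times borel_measurable_power component)
  then show ?thesis
    by (rule indep_vars_cong[THEN iffD1, rotated -1]) (auto simp: F_def K_def link_gain_def)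
qed

lemma gain_moments:
  "has_moments (gain UB) K (rayleigh_moment gamma)"
  "i \<in> {1..N} \<Longrightarrow> has_moments (gain (UR i)) K (rayleigh_moment alpha)"
  "i \<in> {1..N} \<Longrightarrow> has_moments (gain (RB i)) K (rayleigh_moment beta)"
  using CN_norm_has_moments[OF gamma_pos distributed_UB] CN_norm_has_moments[OF alpha_pos]
    CN_norm_has_moments[OF beta_pos] distributed_UR distributed_RB
  by (simp_all add: gain_def[abs_def])

lemma link_gain_moments:
  "has_moments (link_gain 0) K (rayleigh_moment gamma)"
  "i \<in> reflecting \<Longrightarrow> has_moments (link_gain i) K (\<lambda>k. rayleigh_moment alpha k * rayleigh_moment beta k)"
  "i \<in> connected \<Longrightarrow> has_moments (link_gain i) K (\<lambda>k. rayleigh_moment alpha (2 * k))"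
proof -
  show "has_moments (link_gain 0) K (rayleigh_moment gamma)"
    using gain_moments(1) by (simp add: link_gain_def[abs_def])
next
  assume "i \<in> reflecting"
  then have i: "i \<in> {1..N}" "i \<noteq> 0" "A i = 0"
    by (auto simp: reflecting_def)
  have "indep_var borel (\<lambda>\<omega>. \<Sum>j\<in>{UR i}. gain j \<omega>) borel (\<lambda>\<omega>. \<Sum>j\<in>{RB i}. gain j \<omega>)"
    using i by (intro indep_var_sums_of_disjoint[OF indep_gains]) auto
  then have "has_moments (\<lambda>\<omega>. gain (UR i) \<omega> * gain (RB i) \<omega>) K
      (\<lambda>k. rayleigh_moment alpha k * rayleigh_moment beta k)"
    using i gain_moments(2,3) by (intro has_moments_indep_mult) auto
  then show "has_moments (link_gain i) K (\<lambda>k. rayleigh_moment alpha k * rayleigh_moment beta k)"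
    using i by (simp add: link_gain_def[abs_def])
next
  assume "i \<in> connected"
  then have i: "i \<in> {1..N}" "i \<noteq> 0" "A i \<noteq> 0"
    by (auto simp: connected_def)
  show "has_moments (link_gain i) K (\<lambda>k. rayleigh_moment alpha (2 * k))"
    using has_moments_square[OF gain_moments(2)[OF i(1)]] i by (simp add: link_gain_def[abs_def])
qed

lemma coherent_amplitude_moments:
  "has_moments coherent_amplitude K (moment_conv (rayleigh_moment gamma)
     (iid_sum_moment (\<lambda>k. rayleigh_moment alpha k * rayleigh_moment beta k) (card reflecting)))"
proof -
  have "finite reflecting" "0 \<notin> reflecting" "insert 0 reflecting \<subseteq> {0..N}"
    by (auto simp: reflecting_def)
  then have indep: "indep_var borel (link_gain 0) borel (\<lambda>\<omega>. \<Sum>i\<in>reflecting. link_gain i \<omega>)"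
    by (intro indep_vars_sum indep_vars_subset[OF indep_link_gains])
  have sum_moments: "has_moments (\<lambda>\<omega>. \<Sum>i\<in>reflecting. link_gain i \<omega>) K
      (iid_sum_moment (\<lambda>k. rayleigh_moment alpha k * rayleigh_moment beta k) (card reflecting))"
    using \<open>insert 0 reflecting \<subseteq> {0..N}\<close>
    by (intro has_moments_indep_sum indep_vars_subset[OF indep_link_gains] link_gain_moments(2))
      (auto simp: reflecting_def)
  show ?thesis
    unfolding coherent_amplitude_def[abs_def]
    by (rule has_moments_indep_add[OF indep link_gain_moments(1) sum_moments])
qed

lemma connected_energy_moments:
  "has_moments connected_energy K (iid_sum_moment (\<lambda>k. rayleigh_moment alpha (2 * k)) (card connected))"
  unfolding connected_energy_def[abs_def]
  by (intro has_moments_indep_sum indep_vars_subset[OF indep_link_gains] link_gain_moments(3))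
    (auto simp: connected_def)

lemma indep_coherent_amplitude_connected_energy:
  "indep_var borel coherent_amplitude borel connected_energy"
proof -
  have "0 \<notin> reflecting" "finite reflecting"
    by (auto simp: reflecting_def)
  then have "coherent_amplitude = (\<lambda>\<omega>. \<Sum>i\<in>insert 0 reflecting. link_gain i \<omega>)"
    by (simp add: coherent_amplitude_def[abs_def])
  moreover have "indep_var borel (\<lambda>\<omega>. \<Sum>i\<in>insert 0 reflecting. link_gain i \<omega>) borel connected_energy"
    unfolding connected_energy_def[abs_def] using reflecting_connected_partition(1)
    by (intro indep_var_sums_of_disjoint[OF indep_link_gains]) (auto simp: reflecting_def connected_def)
  ultimately show ?thesis
    by simp
qed

lemma snr_moments:
  "has_moments (\<lambda>\<omega>. snr gbar \<omega>) 2
     (\<lambda>k. gbar ^ k * moment_conv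
        (\<lambda>j. moment_conv (rayleigh_moment gamma)
          (iid_sum_moment (\<lambda>k. rayleigh_moment alpha k * rayleigh_moment beta k) (card reflecting))
          (2 * j))
        (iid_sum_moment (\<lambda>k. rayleigh_moment alpha (2 * k)) (card connected)) k)"
proof -
  have "indep_var borel ((\<lambda>x. x\<^sup>2) \<circ> coherent_amplitude) borel ((\<lambda>x. x) \<circ> connected_energy)"
    by (rule indep_var_compose[OF indep_coherent_amplitude_connected_energy]) auto
  then have "indep_var borel (\<lambda>\<omega>. (coherent_amplitude \<omega>)\<^sup>2) borel connected_energy"
    by (simp add: comp_def)
  from has_moments_indep_add[OF this has_moments_square connected_energy_moments]
  show ?thesis
    unfolding snr_eq using coherent_amplitude_moments by (auto intro: has_moments_scale)
qed

lemma snr_moments_closed_form: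
  defines "a \<equiv> real (card connected)" and "b \<equiv> real (card reflecting)"
  shows "(\<integral>\<omega>. snr gbar \<omega> \<partial>M)
      = gbar * ((a + b)^2 * pi^2/16 * alpha^2 * beta^2
         + alpha^2 * beta^2 * ((a + b) * (1 - pi^2/8 * a - pi^2/16) + pi^2/16 * a * (a+1) - a)
         + alpha * beta * gamma * (pi * sqrt pi / 4) * b + a * alpha^2 + gamma^2)"
      (is "?E1 = ?m1")
    and "(\<integral>\<omega>. (snr gbar \<omega>)^2 \<partial>M)
      = gbar^2 * (2 * gamma^4 + 6 * b * (1 + pi^2/16 * (b-1)) * gamma^2 * alpha^2 * beta^2
         + 3 * pi * sqrt pi / 4 * b * gamma^3 * alpha * beta
         + (4*b + 9*pi^2/16 * b*(b-1) + 3*b*(b-1) + 6*pi^2/16 * b*(b-1)*(b-2)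
            + pi^4/256 * b*(b-1)*(b-2)*(b-3)) * alpha^4 * beta^4
         + 2 * sqrt pi * (9*pi/16 * b + 3*pi/4 * b*(b-1) + pi^3/64 * b*(b-1)*(b-2))
           * alpha^3 * beta^3 * gamma
         + 2 * a * gamma^2 * alpha^2 + 2 * b * (1 + pi^2/16 * (b-1)) * a * alpha^4 * beta^2
         + pi * sqrt pi / 2 * b * a * alpha^3 * gamma * beta + a * (a+1) * alpha^4)"
      (is "?E2 = ?m2")
proof -
  define \<mu> where "\<mu> k = rayleigh_moment alpha k * rayleigh_moment beta k" for k
  define \<nu> where "\<nu> k = rayleigh_moment alpha (2 * k)" for k
  define C where "C = moment_conv (rayleigh_moment gamma) (iid_sum_moment \<mu> (card reflecting))"
  define Z where "Z = iid_sum_moment \<nu> (card connected)"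
  have moments: "(\<integral>\<omega>. (snr gbar \<omega>) ^ k \<partial>M)
      = gbar ^ k * moment_conv (\<lambda>j. C (2 * j)) Z k" if "k \<le> 2" for k
    using snr_moments that unfolding \<mu>_def[abs_def] \<nu>_def[abs_def] C_def Z_def has_moments_def by blast
  have sqrt_pi: "sqrt pi * sqrt pi = pi"
    by simp
  have \<mu>: "\<mu> 0 = 1" "\<mu> 1 = pi / 4 * alpha * beta" "\<mu> 2 = alpha\<^sup>2 * beta\<^sup>2"
    "\<mu> 3 = 9 * pi / 16 * alpha ^ 3 * beta ^ 3" "\<mu> 4 = 4 * alpha ^ 4 * beta ^ 4"
    by (simp_all add: \<mu>_def rayleigh_moment_numeral field_simps power2_eq_square power3_eq_cube
        sqrt_pi del: One_nat_def)
  have \<nu>: "\<nu> 0 = 1" "\<nu> 1 = alpha\<^sup>2" "\<nu> 2 = 2 * alpha ^ 4"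
    by (simp_all add: \<nu>_def rayleigh_moment_numeral del: One_nat_def)
  note closed_forms = moment_conv_numeral rayleigh_moment_numeral \<mu> \<nu>
    iid_sum_moment_0 iid_sum_moment_1 iid_sum_moment_2 iid_sum_moment_3 iid_sum_moment_4
  show "?E1 = ?m1"
    using moments[of 1]
    by (simp add: C_def Z_def a_def b_def closed_forms del: One_nat_def)
      (simp add: field_simps eval_nat_numeral)
  show "?E2 = ?m2"
    using moments[of 2]
    by (simp add: C_def Z_def a_def b_def closed_forms del: One_nat_def)
      (simp add: field_simps eval_nat_numeral)
qed

end

section \<open>Moment matching with the Gamma distribution\<close>

lemma nn_integral_power_gamma_density:
  assumes k: "k > 0" and p: "p > 0"
  shows "(\<integral>\<^sup>+x. ennreal (x ^ j * gamma_density k p x) \<partial>lborel) = ennreal (p ^ j * Gamma (k + j) / Gamma k)"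
proof -
  define c where "c = p ^ j / (Gamma k * p)"
  have c: "c \<ge> 0"
    using k p by (simp add: c_def)
  have scaled: "(p * u) ^ j * gamma_density k p (p * u) = c * (indicator {0..} u * u powr (k + j - 1) / exp u)"
    for u
  proof (cases "u > 0")
    case True
    have "(p * u) powr (k - 1) = p powr (k - 1) * u powr (k - 1)"
      using True p by (simp add: powr_mult)
    moreover have "p powr k = p * p powr (k - 1)"
      using p by (simp add: powr_diff)
    moreover have "u powr (k + j - 1) = u ^ j * u powr (k - 1)"
      using True by (simp add: powr_add[symmetric] powr_realpow[symmetric] algebra_simps)
    moreover have "- (p * u) / p = - u"
      using p by simp
    ultimately show ?thesis
      using True p k
      by (simp add: gamma_density_def c_def exp_minus field_simps power_mult_distrib)
  qed (use p in \<open>auto simp: gamma_density_def zero_less_mult_iff indicator_def\<close>)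
  have "(\<integral>\<^sup>+x. ennreal (x ^ j * gamma_density k p x) \<partial>lborel)
      = ennreal p * (\<integral>\<^sup>+u. ennreal ((p * u) ^ j * gamma_density k p (p * u)) \<partial>lborel)"
    using p by (subst nn_integral_real_affine[where c = p and t = 0]) (auto simp: gamma_density_def)
  also have "\<dots> = ennreal p
      * (\<integral>\<^sup>+u. ennreal c * ennreal (indicator {0..} u * u powr (k + j - 1) / exp u) \<partial>lborel)"
    by (simp only: scaled ennreal_mult'[OF c])
  also have "\<dots> = ennreal p * (ennreal c * ennreal (Gamma (k + j)))"
    using k by (subst nn_integral_cmult) (simp_all add: Gamma_conv_nn_integral_real[of "k + j"] add_pos_nonneg)
  also have "\<dots> = ennreal (p ^ j * Gamma (k + j) / Gamma k)"
    using p c by (simp add: ennreal_mult'[symmetric] c_def)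
  finally show ?thesis .
qed

lemma gamma_density_moment:
  assumes "k > 0" "p > 0"
  shows "(\<integral>x. x ^ j * gamma_density k p x \<partial>lborel) = p ^ j * Gamma (k + j) / Gamma k"
proof -
  have "0 \<le> x ^ j * gamma_density k p x" for x
    using assms by (auto simp: gamma_density_def)
  moreover have "0 \<le> p ^ j * Gamma (k + j) / Gamma k"
    using assms by (simp add: add_pos_nonneg)
  ultimately show ?thesis
    using nn_integral_power_gamma_density[OF assms, of j]
    by (subst (asm) nn_integral_eq_integrable) (auto simp: gamma_density_def)
qed

lemma gamma_density_mean_and_second_moment:
  assumes "k > 0" "p > 0"
  shows "(\<integral>x. x * gamma_density k p x \<partial>lborel) = k * p"
    and "(\<integral>x. x\<^sup>2 * gamma_density k p x \<partial>lborel) = k * (k + 1) * p\<^sup>2"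
proof -
  have not_nonpos: "z \<notin> \<int>\<^sub>\<le>\<^sub>0" if "z > 0" for z :: real
    using that by (auto elim!: nonpos_Ints_cases)
  have "Gamma k > 0"
    using assms(1) by simp
  have G1: "Gamma (k + 1) = k * Gamma k"
    using not_nonpos[OF assms(1)] by (rule Gamma_plus1)
  have "Gamma (k + 2) = (k + 1) * Gamma (k + 1)"
    using Gamma_plus1[OF not_nonpos, of "k + 1"] assms(1) by (simp add: add.assoc)
  then have G2: "Gamma (k + 2) = (k + 1) * k * Gamma k"
    by (simp add: G1)
  show "(\<integral>x. x * gamma_density k p x \<partial>lborel) = k * p"
    using gamma_density_moment[OF assms, of 1] G1 \<open>Gamma k > 0\<close> by simp
  show "(\<integral>x. x\<^sup>2 * gamma_density k p x \<partial>lborel) = k * (k + 1) * p\<^sup>2"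
    using gamma_density_moment[OF assms, of 2] G2 \<open>Gamma k > 0\<close> by simp
qed

lemma gamma_moment_matching:
  fixes k p m1 m2 :: real
  assumes "k > 0" "p > 0"
  shows "(k * p = m1 \<and> k * (k + 1) * p\<^sup>2 = m2) \<longleftrightarrow> (k = m1\<^sup>2 / (m2 - m1\<^sup>2) \<and> p = (m2 - m1\<^sup>2) / m1)"
proof
  assume moments: "k * p = m1 \<and> k * (k + 1) * p\<^sup>2 = m2"
  then have var: "m2 - m1\<^sup>2 = k * p\<^sup>2"
    by (auto simp: algebra_simps power2_eq_square)
  show "k = m1\<^sup>2 / (m2 - m1\<^sup>2) \<and> p = (m2 - m1\<^sup>2) / m1"
    unfolding var using moments assms by (auto simp: power2_eq_square)
next
  assume km: "k = m1\<^sup>2 / (m2 - m1\<^sup>2) \<and> p = (m2 - m1\<^sup>2) / m1"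
  then have "m1 \<noteq> 0" "m2 - m1\<^sup>2 \<noteq> 0"
    using assms by auto
  then have "k * p = m1" "k * p\<^sup>2 = m2 - m1\<^sup>2"
    using km by (auto simp: power2_eq_square)
  then show "k * p = m1 \<and> k * (k + 1) * p\<^sup>2 = m2"
    by (auto simp: algebra_simps power2_eq_square)
qed

lemma gamma_density_moment_matching:
  "\<forall>k p. k > 0 \<and> p > 0 \<longrightarrow>
     (((\<integral>x. x * gamma_density k p x \<partial>lborel) = m1 \<and> (\<integral>x. x^2 * gamma_density k p x \<partial>lborel) = m2)
      \<longleftrightarrow> (k = m1^2 / (m2 - m1^2) \<and> p = (m2 - m1^2) / m1))"
  using gamma_density_mean_and_second_moment gamma_moment_matching by simp

theorem proposition2:
  fixes M :: "'s measure"
    and N :: nat and A :: "nat \<Rightarrow> real"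
    and alpha beta gamma gbar :: real
    and hUB :: "'s \<Rightarrow> complex" and hUR hRB :: "nat \<Rightarrow> 's \<Rightarrow> complex"
  assumes "prob_space M"
    and "N \<ge> 1"
    and A01: "\<forall>i\<in>{1..N}. A i = 0 \<or> A i = 1"
    and "alpha > 0" and "beta > 0" and "gamma > 0" and "gbar > 0"
    and indep: "prob_space.indep_vars M (\<lambda>_. borel)
        (\<lambda>j. case j of UB \<Rightarrow> hUB | UR i \<Rightarrow> hUR i | RB i \<Rightarrow> hRB i)
        (insert UB (UR ` {1..N} \<union> RB ` {1..N}))"
    and dUB: "distributed M lborel hUB (CN_density (gamma^2))"
    and dUR: "\<forall>i\<in>{1..N}. distributed M lborel (hUR i) (CN_density (alpha^2))"
    and dRB: "\<forall>i\<in>{1..N}. distributed M lborel (hRB i) (CN_density (beta^2))"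
  shows
    "let a = (\<Sum>i=1..N. A i); n = real N; b = n - a;
         gs = (\<lambda>w. rdars_snr N A gbar (hUB w) (\<lambda>i. hUR i w) (\<lambda>i. hRB i w));
         C3 = 9*pi/16 * b + 3*pi/4 * b*(b-1) + pi^3/64 * b*(b-1)*(b-2);
         C4 = 4*b + 9*pi^2/16 * b*(b-1) + 3*b*(b-1) + 6*pi^2/16 * b*(b-1)*(b-2)
              + pi^4/256 * b*(b-1)*(b-2)*(b-3);
         m1 = gbar * (n^2 * pi^2/16 * alpha^2 * beta^2
               + alpha^2 * beta^2 * (n * (1 - pi^2/8 * a - pi^2/16) + pi^2/16 * a * (a+1) - a)
               + alpha * beta * gamma * (pi * sqrt pi / 4) * b + a * alpha^2 + gamma^2);
         m2 = gbar^2 * (2 * gamma^4 + 6 * b * (1 + pi^2/16 * (b-1)) * gamma^2 * alpha^2 * beta^2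
               + 3 * pi * sqrt pi / 4 * b * gamma^3 * alpha * beta
               + C4 * alpha^4 * beta^4 + 2 * sqrt pi * C3 * alpha^3 * beta^3 * gamma
               + 2 * a * gamma^2 * alpha^2 + 2 * b * (1 + pi^2/16 * (b-1)) * a * alpha^4 * beta^2
               + pi * sqrt pi / 2 * b * a * alpha^3 * gamma * beta + a * (a+1) * alpha^4)
     in (\<integral>w. gs w \<partial>M) = m1 \<and> (\<integral>w. (gs w)^2 \<partial>M) = m2 \<and>
        (\<forall>k p. k > 0 \<and> p > 0 \<longrightarrow>
           (((\<integral>x. x * gamma_density k p x \<partial>lborel) = m1 \<and>
             (\<integral>x. x^2 * gamma_density k p x \<partial>lborel) = m2)
            \<longleftrightarrow> (k = m1^2 / (m2 - m1^2) \<and> p = (m2 - m1^2) / m1)))"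
proof -
  interpret rdars_channels M N A alpha beta gamma hUB hUR hRB
    using assms(1,3-6,8-11) by (intro rdars_channels.intro rdars_channels_axioms.intro) simp_all
  show ?thesis
    unfolding Let_def sum_A_eq_card_connected N_eq_card_connected_reflecting add_diff_cancel_left'
    by (intro conjI snr_moments_closed_form gamma_density_moment_matching)
qed

end
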